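(* Let $s$ be a positive integer and let $h_{s,i,j}$ be as in the context. Then for $0\le i\le s$, $$\sum_{j'=i+1}^{s}h_{s,i,j'}=(-1)^i\binom{s-1}{i}\Big[\frac1s\binom{2s}{s-1}-1\Big],$$ and for $s<i\le 2s$, $$\sum_{j'=0}^{i-s-1}h_{s,2s-i,s-j'}=(-1)^i\binom{s-1}{2s-i}\Big[\frac1s\binom{2s}{s-1}-1\Big].$$
   Context: For a fixed positive integer $s$, the numbers $h_{s,i,j}$ (integers $i\ge 0$, $j$) are defined recursively by: $h_{s,i,j}=0$ if $j\le i$; for $i=0$ and $j\ge 1$, $h_{s,0,j}=\binom{s+j-1}{j}\frac{s-j}{s}$; for $i>0$ and $j>i$, $h_{s,i,j}=-\frac{s-j+1}{i}h_{s,i-1,j-1}-\frac{j-i}{i}h_{s,i-1,j}$. Binomial coefficients $\binom{a}{b}$ with $0\le a<b$ are $0$. *)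

theory Defs
  imports Complex_Main
begin

text \<open>The numbers h_{s,i,j}. The index j is taken in nat: for j <= i the value is 0
  anyway, and the recursion only refers to indices j-1 >= i and j > i-1.\<close>
fun hcoef :: "nat \<Rightarrow> nat \<Rightarrow> nat \<Rightarrow> real" where
  "hcoef s 0 j =
     (if j = 0 then 0 else real ((s + j - 1) choose j) * (real s - real j) / real s)"
| "hcoef s (Suc i) j =
     (if j \<le> Suc i then 0
      else - ((real s - real j + 1) / real (Suc i)) * hcoef s i (j - 1)
           - ((real j - real (Suc i)) / real (Suc i)) * hcoef s i j)"

end

theory Submission
  imports Defs
begin

text \<open>Summing the defining recurrence over \<open>j \<le> s\<close> shows that the row sums
  S_i = sum_{j<=s} h_{s,i,j} satisfy (i+1) S_{i+1} = (i+1-s) S_i: the shifted sum loses nothing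
  at the upper end, because its coefficient s-j+1 vanishes at j = s+1. Hence
  S_i = (-1)^i C(s-1,i) S_0. In row 0, h_{s,0,j} = C(s+j-1,j) - C(s+j-1,j-1) for j >= 1, so two
  hockey-stick sums give S_0 = C(2s,s) - 1 - C(2s,s-1) = C(2s,s-1)/s - 1. The second formula is
  the first one for 2s-i, with the summation reversed.\<close>

lemma hcoef_eq_0: "j \<le> i \<Longrightarrow> hcoef s i j = 0"
  by (cases i) auto

declare hcoef.simps [simp del]

lemma hcoef_Suc_recurrence:
  "real (Suc i) * hcoef s (Suc i) j =
     - (real s - real j + 1) * hcoef s i (j - 1) - (real j - real (Suc i)) * hcoef s i j"
proof (cases "j \<le> Suc i")
  case True
  then show ?thesis
    by (cases "j = Suc i") (simp_all add: hcoef_eq_0)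
next
  case False
  then show ?thesis
    by (simp add: hcoef.simps field_simps del: of_nat_Suc)
qed

definition hrow_sum :: "nat \<Rightarrow> nat \<Rightarrow> real" where
  "hrow_sum s i = (\<Sum>j\<le>s. hcoef s i j)"

lemma hrow_sum_eq_sum_above: "hrow_sum s i = (\<Sum>j=i+1..s. hcoef s i j)"
  unfolding hrow_sum_def
  by (rule sum.mono_neutral_right) (auto intro: hcoef_eq_0)

lemma hrow_sum_Suc: "real (Suc i) * hrow_sum s (Suc i) = (real (Suc i) - real s) * hrow_sum s i"
proof -
  have shifted: "(\<Sum>j\<le>s. (real s - real j + 1) * hcoef s i (j - 1))
      = (\<Sum>j\<le>s. (real s - real j) * hcoef s i j)"
  proof -
    have "(\<Sum>j\<le>s. (real s - real j + 1) * hcoef s i (j - 1))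
        = (\<Sum>j\<le>Suc s. (real s - real j + 1) * hcoef s i (j - 1))"
      by simp
    also have "\<dots> = (real s + 1) * hcoef s i 0 + (\<Sum>j\<le>s. (real s - real j) * hcoef s i j)"
      by (subst sum.atMost_Suc_shift) simp
    finally show ?thesis
      by (simp add: hcoef_eq_0)
  qed
  have "real (Suc i) * hrow_sum s (Suc i)
      = (\<Sum>j\<le>s. - (real s - real j + 1) * hcoef s i (j - 1) - (real j - real (Suc i)) * hcoef s i j)"
    unfolding hrow_sum_def sum_distrib_left hcoef_Suc_recurrence ..
  also have "\<dots> = - (\<Sum>j\<le>s. (real s - real j) * hcoef s i j)
        - (\<Sum>j\<le>s. (real j - real (Suc i)) * hcoef s i j)"
    by (simp only: sum_subtractf mult_minus_left sum_negf shifted)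
  also have "\<dots> = (\<Sum>j\<le>s. (real (Suc i) - real s) * hcoef s i j)"
    unfolding sum_negf[symmetric] sum_subtractf[symmetric]
    by (rule sum.cong) (simp_all add: algebra_simps)
  finally show ?thesis
    by (simp add: hrow_sum_def sum_distrib_left)
qed

lemma hrow_sum_eq_gbinomial: "hrow_sum s i = (-1) ^ i * ((real s - 1) gchoose i) * hrow_sum s 0"
proof (induction i)
  case 0
  then show ?case by simp
next
  case (Suc i)
  have absorption:
    "real (Suc i) * ((real s - 1) gchoose Suc i) = (real s - 1 - real i) * ((real s - 1) gchoose i)"
    by (simp only: gbinomial_absorption gbinomial_absorb_comp)
  have "real (Suc i) * hrow_sum s (Suc i)
      = (real s - 1 - real i) * ((real s - 1) gchoose i) * ((-1) ^ Suc i * hrow_sum s 0)"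
    by (simp only: hrow_sum_Suc Suc.IH) (simp add: algebra_simps)
  also have "\<dots> = real (Suc i) * ((-1) ^ Suc i * ((real s - 1) gchoose Suc i) * hrow_sum s 0)"
    unfolding absorption[symmetric] by (simp only: ac_simps)
  finally have "real (Suc i) * hrow_sum s (Suc i)
      = real (Suc i) * ((-1) ^ Suc i * ((real s - 1) gchoose Suc i) * hrow_sum s 0)" .
  then show ?case
    by (rule mult_left_cancel[THEN iffD1, rotated]) simp
qed

lemma hcoef_Suc_0_Suc:
  "hcoef (Suc r) 0 (Suc k) = real (Suc (r + k) choose Suc k) - real (Suc (r + k) choose k)"
proof -
  have "real (Suc k) * real (Suc (k + r) choose Suc k) = real (Suc r) * real (Suc (k + r) choose k)"
    using Suc_times_binomial_add[of k r] by (metis of_nat_mult)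
  then show ?thesis
    by (simp add: hcoef.simps field_simps add.commute del: of_nat_Suc)
qed

lemma hrow_sum_0:
  assumes "0 < s"
  shows "hrow_sum s 0 = real ((2 * s) choose (s - 1)) / real s - 1"
proof -
  obtain r where s: "s = Suc r"
    using assms gr0_implies_Suc by blast
  have upper: "1 + (\<Sum>k\<le>r. real (Suc (r + k) choose Suc k)) = real ((2 * s) choose s)"
  proof -
    have "(\<Sum>j\<le>Suc r. r + j choose j) = 1 + (\<Sum>k\<le>r. Suc (r + k) choose Suc k)"
      by (subst sum.atMost_Suc_shift) simp
    moreover have "(\<Sum>j\<le>Suc r. r + j choose j) = (2 * s) choose s"
      using sum_choose_lower[of r "Suc r"] s by (simp del: binomial_Suc_Suc add: mult_2)
    ultimately show ?thesis
      by (metis of_nat_1 of_nat_add of_nat_sum)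
  qed
  have lower: "(\<Sum>k\<le>r. real (Suc (r + k) choose k)) = real ((2 * s) choose (s - 1))"
  proof -
    have "(\<Sum>k\<le>r. Suc r + k choose k) = (2 * s) choose (s - 1)"
      using sum_choose_lower[of "Suc r" r] s by (simp del: binomial_Suc_Suc add: mult_2)
    then show ?thesis
      by (simp flip: of_nat_sum)
  qed
  have catalan: "real s * real ((2 * s) choose s) = (real s + 1) * real ((2 * s) choose (s - 1))"
  proof -
    have "s * ((2 * s) choose s) = (s + 1) * ((2 * s) choose (s - 1))"
      using Suc_times_binomial_add[of r "Suc r"] s by (simp del: binomial_Suc_Suc add: mult_2)
    then show ?thesis
      by (metis of_nat_1 of_nat_add of_nat_mult)
  qed
  have "hrow_sum s 0 = (\<Sum>k\<le>r. hcoef s 0 (Suc k))"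
    unfolding hrow_sum_def s by (subst sum.atMost_Suc_shift) (simp add: hcoef_eq_0)
  also have "\<dots> = real ((2 * s) choose s) - 1 - real ((2 * s) choose (s - 1))"
    using upper lower by (simp add: s hcoef_Suc_0_Suc sum_subtractf)
  also have "\<dots> = real ((2 * s) choose (s - 1)) / real s - 1"
    using catalan assms by (simp add: field_simps)
  finally show ?thesis .
qed

lemma sum_atLeastAtMost_reflect:
  fixes f :: "nat \<Rightarrow> 'a::comm_monoid_add"
  assumes "m \<le> n"
  shows "(\<Sum>j=0..n - m. f (n - j)) = (\<Sum>j=m..n. f j)"
  by (rule sum.reindex_bij_witness[where i = "\<lambda>j. n - j" and j = "\<lambda>j. n - j"])
    (use assms in auto)

theorem proposition11:
  fixes s :: nat
  assumes "s > 0"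
  shows "(\<forall>i. i \<le> s \<longrightarrow>
            (\<Sum>j'=i+1..s. hcoef s i j') =
              (-1) ^ i * real ((s - 1) choose i) * (real ((2 * s) choose (s - 1)) / real s - 1))
       \<and> (\<forall>i. s < i \<and> i \<le> 2 * s \<longrightarrow>
            (\<Sum>j'=0..i-s-1. hcoef s (2 * s - i) (s - j')) =
              (-1) ^ i * real ((s - 1) choose (2 * s - i)) * (real ((2 * s) choose (s - 1)) / real s - 1))"
proof -
  have row: "(\<Sum>j=i+1..s. hcoef s i j) =
      (-1) ^ i * real ((s - 1) choose i) * (real ((2 * s) choose (s - 1)) / real s - 1)" for i
  proof -
    have "real ((s - 1) choose i) = (real s - 1) gchoose i"
      using assms by (simp add: binomial_gbinomial of_nat_diff)
    then show ?thesis
      unfolding hrow_sum_eq_sum_above[symmetric] hrow_sum_eq_gbinomial[of s i] hrow_sum_0[OF assms]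
      by simp
  qed
  show ?thesis
  proof (intro conjI allI impI)
    fix i :: nat
    assume i: "s < i \<and> i \<le> 2 * s"
    define k where "k = 2 * s - i"
    have k: "Suc k \<le> s" "i - s - 1 = s - Suc k" "i = k + 2 * (s - k)"
      using i by (auto simp: k_def)
    have "(\<Sum>j'=0..i-s-1. hcoef s k (s - j')) = (\<Sum>j=k+1..s. hcoef s k j)"
      unfolding k(2) Suc_eq_plus1 by (rule sum_atLeastAtMost_reflect[OF k(1)[unfolded Suc_eq_plus1]])
    also have "\<dots> = (-1) ^ k * real ((s - 1) choose k) * (real ((2 * s) choose (s - 1)) / real s - 1)"
      by (rule row)
    also have "(-1::real) ^ k = (-1) ^ i"
      by (subst k(3)) (simp add: power_add power_mult)
    finally show "(\<Sum>j'=0..i-s-1. hcoef s (2 * s - i) (s - j')) =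
        (-1) ^ i * real ((s - 1) choose (2 * s - i)) * (real ((2 * s) choose (s - 1)) / real s - 1)"
      unfolding k_def .
  qed (rule row)
qed

end
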